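(* Let $Q$ be a non-degenerate quadratic form on a finite-dimensional real vector space $V$ with associated bilinear form $Q(\cdot,\cdot)$, let $E\subset V$ be a subspace, $E^Q=\{v: Q(v,e)=0\ \forall e\in E\}$ and $E_0:=E\cap E^Q$. Let $T:E\to V/E$ be linear. Then $Q(Tx,x)=0$ for all $x\in E_0$ (this is well-defined since $x\in E^Q$) if and only if there exists a linear map $T':V\to V$ lifting $T$ (i.e. $T'(e)+E=T(e)$ for all $e\in E$) with $Q(T'x,x)=0$ for all $x\in V$, i.e. $T'\in\mathfrak{so}(Q)$. *)

theory Defs
  imports "HOL-Analysis.Analysis"
begin

text \<open>A quadratic form Q on the finite-dimensional real vector space V (a type of class
euclidean_space) is given through its associated symmetric bilinear form B, Q v = B v v.\<close>

definition sym_bilinear_form :: "('a::real_vector \<Rightarrow> 'a \<Rightarrow> real) \<Rightarrow> bool" where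
  "sym_bilinear_form B \<longleftrightarrow> bilinear B \<and> (\<forall>u v. B u v = B v u)"

definition nondegenerate_form :: "('a::real_vector \<Rightarrow> 'a \<Rightarrow> real) \<Rightarrow> bool" where
  "nondegenerate_form B \<longleftrightarrow> (\<forall>v. (\<forall>w. B v w = 0) \<longrightarrow> v = 0)"

definition q_orth :: "('a \<Rightarrow> 'a \<Rightarrow> real) \<Rightarrow> 'a set \<Rightarrow> 'a set" where
  "q_orth B E = {v. \<forall>e\<in>E. B v e = 0}"

text \<open>A linear map T : E \<rightarrow> V/E, represented by a choice of representatives
t : V \<Rightarrow> V (only values on E matter, taken modulo E): t is linear modulo E on E.\<close>
definition quot_linear_on :: "'a::real_vector set \<Rightarrow> ('a \<Rightarrow> 'a) \<Rightarrow> bool" where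
  "quot_linear_on E t \<longleftrightarrow>
     (\<forall>x\<in>E. \<forall>y\<in>E. \<forall>a b. t (a *\<^sub>R x + b *\<^sub>R y) - (a *\<^sub>R t x + b *\<^sub>R t y) \<in> E)"

end

theory Submission
  imports Defs
begin

text \<open>Lift T to a linear map L of V. The form (x, y) \<mapsto> Q(Lx, y) is alternating on
E_0 = E \<inter> E^Q, and it suffices to find an alternating bilinear form \<omega> on V agreeing with it on
E \<times> E^Q: representing \<omega> through the non-degenerate Q as \<omega>(x, y) = Q(T'x, y) gives a skew T'
with T'e - Le orthogonal to E^Q, i.e. in (E^Q)^Q = E. Choose linear P fixing E with
P(E^Q) \<subseteq> E_0 and R fixing E^Q with R(E) \<subseteq> E_0, and take \<omega>(x, y) = m(x, y) - m(y, x) for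
m(x, y) = Q(LPx, Ry) - Q(LPRx, PRy)/2; on E \<times> E^Q the two halves of the correction term
cancel by the antisymmetry of Q(L-, -) on E_0.\<close>

definition form_vec :: "('a::euclidean_space \<Rightarrow> 'a \<Rightarrow> real) \<Rightarrow> 'a \<Rightarrow> 'a" where
  "form_vec B v = (\<Sum>b\<in>Basis. B v b *\<^sub>R b)"

lemma form_vec_inner:
  fixes B :: "'a::euclidean_space \<Rightarrow> 'a \<Rightarrow> real"
  assumes "bilinear B"
  shows "B v y = form_vec B v \<bullet> y"
proof -
  have lin: "linear (B v)" using assms by (simp add: bilinear_def)
  have "B v y = B v (\<Sum>b\<in>Basis. (y \<bullet> b) *\<^sub>R b)" by (simp add: euclidean_representation)
  also have "\<dots> = (\<Sum>b\<in>Basis. (y \<bullet> b) * B v b)"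
    by (simp add: linear_sum[OF lin] linear_scale[OF lin])
  also have "\<dots> = form_vec B v \<bullet> y"
    unfolding form_vec_def inner_sum_left by (rule sum.cong) (simp_all add: inner_commute mult.commute)
  finally show ?thesis .
qed

lemma linear_form_vec:
  fixes B :: "'a::euclidean_space \<Rightarrow> 'a \<Rightarrow> real"
  assumes "bilinear B"
  shows "linear (form_vec B)"
proof (rule linearI)
  show "form_vec B (x + y) = form_vec B x + form_vec B y" for x y
    using assms by (simp add: form_vec_def bilinear_ladd scaleR_add_left sum.distrib)
  show "form_vec B (c *\<^sub>R x) = c *\<^sub>R form_vec B x" for c x
    using assms by (simp add: form_vec_def bilinear_lmul scaleR_sum_right)
qed

lemma inj_form_vec:
  fixes B :: "'a::euclidean_space \<Rightarrow> 'a \<Rightarrow> real"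
  assumes "bilinear B" "nondegenerate_form B"
  shows "inj (form_vec B)"
proof (rule injI)
  fix x y assume "form_vec B x = form_vec B y"
  then have "B (x - y) w = 0" for w
    using assms(1) by (simp add: bilinear_lsub form_vec_inner inner_diff_left)
  then show "x = y" using assms(2) unfolding nondegenerate_form_def by fastforce
qed

lemma bilinear_form_representable:
  fixes B w :: "'a::euclidean_space \<Rightarrow> 'a \<Rightarrow> real"
  assumes "bilinear B" "nondegenerate_form B" "bilinear w"
  obtains T where "linear T" "\<And>x y. B (T x) y = w x y"
proof -
  have "surj (form_vec B)"
    using linear_injective_imp_surjective linear_form_vec inj_form_vec assms(1,2) by blast
  then obtain g where g: "linear g" "form_vec B \<circ> g = id"
    using linear_surjective_right_inverse linear_form_vec[OF assms(1)] by blast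
  show thesis
  proof
    show "linear (g \<circ> form_vec w)" using g(1) linear_form_vec[OF assms(3)] by (rule linear_compose[rotated])
    have "form_vec B (g v) = v" for v using g(2) by (metis comp_apply id_apply)
    then show "B ((g \<circ> form_vec w) x) y = w x y" for x y
      by (simp add: form_vec_inner[OF assms(1)] form_vec_inner[OF assms(3)])
  qed
qed

lemma form_adjoint_exists:
  fixes B :: "'a::euclidean_space \<Rightarrow> 'a \<Rightarrow> real"
  assumes "bilinear B" "nondegenerate_form B" "linear A"
  obtains A' where "linear A'" "\<And>x y. B (A' x) y = B x (A y)"
proof -
  have "bilinear (\<lambda>x y. B x (A y))"
    using assms(1,3) unfolding bilinear_def by (auto intro: linear_compose[unfolded o_def])
  then show thesis using bilinear_form_representable[OF assms(1,2)] that by blast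
qed

lemma form_skew_part_exists:
  fixes B :: "'a::euclidean_space \<Rightarrow> 'a \<Rightarrow> real"
  assumes "sym_bilinear_form B" "nondegenerate_form B" "linear M"
  obtains T where "linear T" "\<And>x y. B (T x) y = B (M x) y - B (M y) x"
proof -
  have bl: "bilinear B" and sym: "\<And>u v. B u v = B v u"
    using assms(1) by (auto simp: sym_bilinear_form_def)
  obtain M' where M': "linear M'" "\<And>x y. B (M' x) y = B x (M y)"
    using form_adjoint_exists[OF bl assms(2,3)] by blast
  show thesis
  proof
    show "linear (\<lambda>x. M x - M' x)"
      using assms(3) M'(1) by (rule linear_compose_sub)
    show "B (M x - M' x) y = B (M x) y - B (M y) x" for x y
      by (simp add: bilinear_lsub[OF bl] M'(2) sym[of x])
  qed
qed

lemma subspace_q_orth: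
  assumes "bilinear B"
  shows "subspace (q_orth B E)"
  unfolding subspace_def q_orth_def
  by (simp add: bilinear_ladd[OF assms] bilinear_lmul[OF assms] bilinear_lzero[OF assms])

lemma q_orth_q_orth_subset:
  fixes B :: "'a::euclidean_space \<Rightarrow> 'a \<Rightarrow> real"
  assumes "sym_bilinear_form B" "nondegenerate_form B" "subspace E"
  shows "q_orth B (q_orth B E) \<subseteq> E"
proof
  fix z assume z: "z \<in> q_orth B (q_orth B E)"
  have bl: "bilinear B" and sym: "\<And>u v. B u v = B v u"
    using assms(1) by (auto simp: sym_bilinear_form_def)
  let ?A = "form_vec B"
  have "q_orth B E = (?A ` E)\<^sup>\<bottom>"
    by (auto simp: q_orth_def orthogonal_comp_def orthogonal_def form_vec_inner[OF bl, symmetric]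
        intro: sym[THEN trans])
  then have "?A z \<in> (?A ` E)\<^sup>\<bottom>\<^sup>\<bottom>"
    using z by (auto simp: q_orth_def orthogonal_comp_def orthogonal_def form_vec_inner[OF bl] inner_commute)
  also have "\<dots> = ?A ` E"
    by (rule orthogonal_comp_self[OF linear_subspace_image[OF linear_form_vec[OF bl] assms(3)]])
  finally obtain e where "e \<in> E" "?A z = ?A e" by blast
  then show "z \<in> E" using inj_form_vec[OF bl assms(2)] by (metis injD)
qed

lemma subspace_lift_locus:
  assumes E: "subspace E" and t: "quot_linear_on E t" and L: "linear L"
  shows "subspace {e \<in> E. L e - t e \<in> E}" (is "subspace ?G")
  unfolding subspace_def
proof (intro conjI ballI allI)
  have t_comb: "t (a *\<^sub>R x + b *\<^sub>R y) - (a *\<^sub>R t x + b *\<^sub>R t y) \<in> E"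
    if "x \<in> E" "y \<in> E" for x y a b
    using t that by (simp add: quot_linear_on_def)
  have t_add: "t (x + y) - (t x + t y) \<in> E" if "x \<in> E" "y \<in> E" for x y
    using t_comb[of x y 1 1] that by simp
  have t_scale: "t (c *\<^sub>R x) - c *\<^sub>R t x \<in> E" if "x \<in> E" for c x
    using t_comb[of x x c 0] that by simp
  have "t 0 \<in> E"
    using t_scale[of 0 0] subspace_0[OF E] by simp
  then show "0 \<in> ?G"
    using subspace_0[OF E] subspace_neg[OF E] by (simp add: linear_0[OF L])
  fix x y c assume x: "x \<in> ?G" and y: "y \<in> ?G"
  have "L (x + y) - t (x + y) = (L x - t x) + (L y - t y) - (t (x + y) - (t x + t y))"
    by (simp add: linear_add[OF L])
  moreover have "\<dots> \<in> E"
    using x y by (intro subspace_diff[OF E subspace_add[OF E]] t_add) auto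
  ultimately have "L (x + y) - t (x + y) \<in> E"
    by (simp only:)
  then show "x + y \<in> ?G"
    using x y subspace_add[OF E] by auto
  have "L (c *\<^sub>R x) - t (c *\<^sub>R x) = c *\<^sub>R (L x - t x) - (t (c *\<^sub>R x) - c *\<^sub>R t x)"
    by (simp add: linear_scale[OF L] scaleR_diff_right)
  moreover have "\<dots> \<in> E"
    using x by (intro subspace_diff[OF E subspace_scale[OF E]] t_scale) auto
  ultimately have "L (c *\<^sub>R x) - t (c *\<^sub>R x) \<in> E"
    by (simp only:)
  then show "c *\<^sub>R x \<in> ?G"
    using x subspace_scale[OF E] by auto
qed

lemma quot_linear_on_liftable:
  fixes t :: "'a::euclidean_space \<Rightarrow> 'a"
  assumes E: "subspace E" and t: "quot_linear_on E t"
  obtains L where "linear L" "\<And>e. e \<in> E \<Longrightarrow> L e - t e \<in> E"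
proof -
  obtain C where C: "C \<subseteq> E" "independent C" "E \<subseteq> span C"
    by (meson basis_exists)
  obtain L where L: "linear L" "\<And>x. x \<in> C \<Longrightarrow> L x = t x"
    using linear_independent_extend[OF C(2), of t] by blast
  have "C \<subseteq> {e \<in> E. L e - t e \<in> E}"
    using C(1) L(2) subspace_0[OF E] by auto
  then have "span C \<subseteq> {e \<in> E. L e - t e \<in> E}"
    by (rule span_minimal[OF _ subspace_lift_locus[OF E t L(1)]])
  then show thesis
    using that L(1) C(3) by blast
qed

lemma linear_projection_onto_subspace:
  fixes K :: "'a::euclidean_space set"
  assumes "subspace K"
  obtains p :: "'a \<Rightarrow> 'a" where "linear p" "range p \<subseteq> K" "\<And>x. x \<in> K \<Longrightarrow> p x = x"
proof -
  obtain C where C: "C \<subseteq> K" "independent C" "K \<subseteq> span C"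
    by (meson basis_exists)
  obtain p where p: "linear p" "\<And>x. x \<in> C \<Longrightarrow> p x = id x" "range p = span (id ` C)"
    using linear_independent_extend_subspace[OF C(2), of id] by blast
  show thesis
  proof
    show "linear p" by fact
    show "range p \<subseteq> K"
      using p(3) span_minimal[OF C(1) assms] by simp
    show "p x = x" if "x \<in> K" for x
      using linear_eq_on_span[OF p(1) linear_id] p(2) C(3) that by (metis id_apply subsetD)
  qed
qed

lemma independent_Un_bases_sharing_Int:
  fixes E F :: "'a::euclidean_space set"
  assumes E: "subspace E" and F: "subspace F"
    and C: "C \<subseteq> E" "independent C" "E \<subseteq> span C"
    and D: "D \<subseteq> F" "independent D" "F \<subseteq> span D"
    and shared: "E \<inter> F \<subseteq> span (C \<inter> D)"
  shows "independent (C \<union> D)"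
proof -
  let ?S = "{x + y |x y. x \<in> E \<and> y \<in> F}"
  have finite: "finite C" "finite D"
    using C(2) D(2) by (simp_all add: finiteI_independent)
  have "C \<union> D \<subseteq> ?S"
  proof
    fix v assume "v \<in> C \<union> D"
    then have "(v = v + 0 \<and> v \<in> E \<and> 0 \<in> F) \<or> (v = 0 + v \<and> 0 \<in> E \<and> v \<in> F)"
      using C(1) D(1) subspace_0[OF E] subspace_0[OF F] by auto
    then show "v \<in> ?S" by blast
  qed
  moreover have "?S \<subseteq> span (C \<union> D)"
  proof
    fix v assume "v \<in> ?S"
    then obtain x y where "v = x + y" "x \<in> span C" "y \<in> span D"
      using C(3) D(3) by blast
    then show "v \<in> span (C \<union> D)"
      using span_mono[of C "C \<union> D"] span_mono[of D "C \<union> D"] by (auto intro: span_add)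
  qed
  moreover have "card (C \<union> D) = dim ?S"
  proof -
    have "C \<inter> D \<subseteq> E \<inter> F" "independent (C \<inter> D)"
      using C(1,2) D(1) independent_mono by blast+
    then have "dim E = card C" "dim F = card D" "dim (E \<inter> F) = card (C \<inter> D)"
      using basis_card_eq_dim[OF C(1,3,2)] basis_card_eq_dim[OF D(1,3,2)]
        basis_card_eq_dim[OF _ shared] by simp_all
    then show ?thesis
      using dim_sums_Int[OF E F] card_Un_Int[OF finite] by simp
  qed
  ultimately show ?thesis
    using card_eq_dim[of "C \<union> D" ?S] finite by simp
qed

lemma linear_glue_on_subspaces:
  fixes f g :: "'a::euclidean_space \<Rightarrow> 'b::real_vector"
  assumes E: "subspace E" and F: "subspace F" and "linear f" "linear g"
    and agree: "\<And>x. x \<in> E \<inter> F \<Longrightarrow> f x = g x"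
  obtains h where "linear h" "\<And>x. x \<in> E \<Longrightarrow> h x = f x" "\<And>x. x \<in> F \<Longrightarrow> h x = g x"
proof -
  obtain A where A: "A \<subseteq> E \<inter> F" "independent A" "E \<inter> F \<subseteq> span A"
    by (meson basis_exists)
  obtain C where C: "A \<subseteq> C" "C \<subseteq> E" "independent C" "E \<subseteq> span C"
    using maximal_independent_subset_extend[of A E] A by blast
  obtain D where D: "A \<subseteq> D" "D \<subseteq> F" "independent D" "F \<subseteq> span D"
    using maximal_independent_subset_extend[of A F] A by blast
  have "E \<inter> F \<subseteq> span (C \<inter> D)"
    using A(3) C(1) D(1) span_mono[of A "C \<inter> D"] by blast
  then have "independent (C \<union> D)"
    using independent_Un_bases_sharing_Int[OF E F C(2-4) D(2-4)] by blast
  then obtain h where h: "linear h" "\<And>x. x \<in> C \<union> D \<Longrightarrow> h x = (if x \<in> C then f x else g x)"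
    using linear_independent_extend[of "C \<union> D" "\<lambda>x. if x \<in> C then f x else g x"] by blast
  show thesis
  proof
    show "linear h" by fact
    show "h x = f x" if "x \<in> E" for x
      using linear_eq_on_span[OF h(1) \<open>linear f\<close>, of C] h(2) C(4) that by auto
    have "h x = g x" if "x \<in> D" for x
      using h(2)[of x] agree[of x] that C(2) D(2) by auto
    then show "h x = g x" if "x \<in> F" for x
      using linear_eq_on_span[OF h(1) \<open>linear g\<close>, of D] D(4) that by auto
  qed
qed

lemma linear_fixing_subspace_into_Int:
  fixes E F :: "'a::euclidean_space set"
  assumes "subspace E" "subspace F"
  obtains P where "linear P" "\<And>x. x \<in> E \<Longrightarrow> P x = x" "\<And>y. y \<in> F \<Longrightarrow> P y \<in> E \<inter> F"
proof -
  obtain p where p: "linear p" "range p \<subseteq> E \<inter> F" "\<And>x. x \<in> E \<inter> F \<Longrightarrow> p x = x"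
    using linear_projection_onto_subspace subspace_inter[OF assms] by blast
  have "id x = p x" if "x \<in> E \<inter> F" for x
    using p(3) that by simp
  then obtain P where "linear P" "\<And>x. x \<in> E \<Longrightarrow> P x = id x" "\<And>y. y \<in> F \<Longrightarrow> P y = p y"
    using linear_glue_on_subspaces[OF assms linear_id p(1)] by blast
  then show thesis
    using p(2) by (intro that[of P]) auto
qed

lemma skew_on_subspace_antisym:
  assumes "bilinear B" "linear L" "subspace K"
    and skew: "\<And>x. x \<in> K \<Longrightarrow> B (L x) x = 0"
    and "u \<in> K" "v \<in> K"
  shows "B (L u) v = - B (L v) u"
proof -
  have "B (L (u + v)) (u + v) = 0"
    using assms by (simp add: subspace_add)
  then have "B (L u) v + B (L v) u = 0"
    using skew[of u] skew[of v] assms(1,2,5,6) by (simp add: linear_add bilinear_ladd bilinear_radd)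
  then show ?thesis
    by (simp add: eq_neg_iff_add_eq_0)
qed

lemma q_orth_form_cong:
  assumes "sym_bilinear_form B" "x \<in> q_orth B E" "a - b \<in> E"
  shows "B a x = B b x"
proof -
  have "bilinear B" "B (a - b) x = B x (a - b)"
    using assms(1) by (simp_all add: sym_bilinear_form_def)
  moreover have "B x (a - b) = 0"
    using assms(2,3) by (simp add: q_orth_def)
  ultimately show ?thesis
    by (simp add: bilinear_lsub)
qed

lemma skew_lift_exists:
  fixes B :: "'a::euclidean_space \<Rightarrow> 'a \<Rightarrow> real"
  assumes sym: "sym_bilinear_form B" and nd: "nondegenerate_form B" and E: "subspace E"
    and L: "linear L" and skew: "\<And>x. x \<in> E \<inter> q_orth B E \<Longrightarrow> B (L x) x = 0"
  obtains T' where "linear T'" "\<And>e. e \<in> E \<Longrightarrow> T' e - L e \<in> E" "\<And>x. B (T' x) x = 0"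
proof -
  have bl: "bilinear B"
    using sym by (simp add: sym_bilinear_form_def)
  let ?F = "q_orth B E"
  have F: "subspace ?F" using subspace_q_orth[OF bl] .
  obtain P where P: "linear P" "\<And>x. x \<in> E \<Longrightarrow> P x = x" "\<And>y. y \<in> ?F \<Longrightarrow> P y \<in> E \<inter> ?F"
    using linear_fixing_subspace_into_Int[OF E F] by blast
  obtain R where R: "linear R" "\<And>y. y \<in> ?F \<Longrightarrow> R y = y" "\<And>x. x \<in> E \<Longrightarrow> R x \<in> ?F \<inter> E"
    using linear_fixing_subspace_into_Int[OF F E] by blast
  obtain R' where R': "linear R'" "\<And>x y. B (R' x) y = B x (R y)"
    using form_adjoint_exists[OF bl nd R(1)] by blast
  obtain S' where S': "linear S'" "\<And>x y. B (S' x) y = B x (P (R y))"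
    using form_adjoint_exists[OF bl nd linear_compose[OF R(1) P(1)]] unfolding o_def by blast
  define M where "M x = R' (L (P x)) - (1/2) *\<^sub>R S' (L (P (R x)))" for x
  have "linear (R' \<circ> (L \<circ> P))" "linear (S' \<circ> (L \<circ> (P \<circ> R)))"
    by (intro linear_compose L P(1) R(1) R'(1) S'(1))+
  then have "linear M"
    unfolding M_def o_def by (intro linear_compose_sub linear_compose_scale_right)
  have M_form: "B (M x) y = B (L (P x)) (R y) - B (L (P (R x))) (P (R y)) / 2" for x y
    by (simp add: M_def bilinear_lsub[OF bl] bilinear_lmul[OF bl] R'(2) S'(2))
  obtain T' where T': "linear T'" "\<And>x y. B (T' x) y = B (M x) y - B (M y) x"
    using form_skew_part_exists[OF sym nd \<open>linear M\<close>] by blast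
  show thesis
  proof
    show "linear T'" by fact
    show "B (T' x) x = 0" for x
      by (simp add: T'(2))
    show "T' e - L e \<in> E" if e: "e \<in> E" for e
    proof -
      have "B (T' e - L e) y = 0" if y: "y \<in> ?F" for y
      proof -
        have Re: "R e \<in> E \<inter> ?F" and Py: "P y \<in> E \<inter> ?F" using R(3) P(3) e y by auto
        have "B (L (R e)) (P y) = - B (L (P y)) (R e)"
          using skew_on_subspace_antisym[OF bl L subspace_inter[OF E F] skew Re Py] .
        moreover have "B (T' e) y
            = B (L e) y - B (L (R e)) (P y) / 2 - B (L (P y)) (R e) / 2"
          using Re by (simp add: T'(2) M_form P(2) R(2) e y)
        ultimately show ?thesis
          by (simp add: bilinear_lsub[OF bl])
      qed
      then show ?thesis
        using q_orth_q_orth_subset[OF sym nd E] by (auto simp: q_orth_def)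
    qed
  qed
qed

theorem mainTheorem10:
  fixes B :: "'a::euclidean_space \<Rightarrow> 'a \<Rightarrow> real"
    and E :: "'a set"
    and t :: "'a \<Rightarrow> 'a"
  assumes "sym_bilinear_form B"
    and "nondegenerate_form B"
    and "subspace E"
    and "quot_linear_on E t"
  shows "(\<forall>x \<in> E \<inter> q_orth B E. B (t x) x = 0) \<longleftrightarrow>
         (\<exists>T'. linear T' \<and> (\<forall>e\<in>E. T' e - t e \<in> E) \<and> (\<forall>x. B (T' x) x = 0))"
proof
  assume t_skew: "\<forall>x \<in> E \<inter> q_orth B E. B (t x) x = 0"
  obtain L where L: "linear L" "\<And>e. e \<in> E \<Longrightarrow> L e - t e \<in> E"
    using quot_linear_on_liftable[OF assms(3,4)] by blast
  have "B (L x) x = 0" if "x \<in> E \<inter> q_orth B E" for x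
    using q_orth_form_cong[OF assms(1) _ L(2)] t_skew that by simp
  then obtain T' where T': "linear T'" "\<And>e. e \<in> E \<Longrightarrow> T' e - L e \<in> E" "\<And>x. B (T' x) x = 0"
    using skew_lift_exists[OF assms(1-3) L(1)] by blast
  have "T' e - t e \<in> E" if "e \<in> E" for e
    using subspace_add[OF assms(3) T'(2) L(2), OF that that] by simp
  with T' show "\<exists>T'. linear T' \<and> (\<forall>e\<in>E. T' e - t e \<in> E) \<and> (\<forall>x. B (T' x) x = 0)"
    by blast
next
  assume "\<exists>T'. linear T' \<and> (\<forall>e\<in>E. T' e - t e \<in> E) \<and> (\<forall>x. B (T' x) x = 0)"
  then obtain T' where T': "\<And>e. e \<in> E \<Longrightarrow> T' e - t e \<in> E" "\<And>x. B (T' x) x = 0"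
    by blast
  show "\<forall>x \<in> E \<inter> q_orth B E. B (t x) x = 0"
  proof
    fix x assume "x \<in> E \<inter> q_orth B E"
    then show "B (t x) x = 0"
      using q_orth_form_cong[OF assms(1) _ T'(1)] T'(2)[of x] by force
  qed
qed

end
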